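(* For any nonempty starting set $S_0\subseteq V$, any integer $T\geq 0$, and any stopping time $\tau$ (with respect to the natural filtration) for the volume-biased evolving set process $(S_t)$ started from $S_0$ with $\tau\leq T$ almost surely, \[ \widehat{\mathbf E}_{S_0}\Big[\frac{\mathrm{cost}(S_0,\dots,S_\tau)}{\mu(S_\tau)}\Big] \leq 1+4\sqrt{T\log\mu(V)}, \] where $\mathrm{cost}(S_0,\dots,S_t)=\mu(S_0)+\sum_{j=1}^{t}\big(\mu(S_j\,\Delta\, S_{j-1})+\partial(S_{j-1})\big)$ and $\Delta$ denotes symmetric difference.
   Context: Let $G=(V,E)$ be a finite simple undirected graph in which every vertex has positive degree $d(x)$. For $S\subseteq V$, $\mu(S)=\sum_{x\in S}d(x)$, $\partial(S)$ is the number of edges with exactly one endpoint in $S$, and $\phi(S)=\partial(S)/\mu(S)$. $\log$ is the natural logarithm. The lazy random walk has transition kernel $p(x,y)=1/(2d(x))$ if $\{x,y\}\in E$, $p(x,x)=1/2$, and $0$ otherwise; $p(x,S)=\sum_{y\in S}p(x,y)$. The evolving set process (ESP): from state $S$, pick $U$ uniform on $[0,1]$ and move to $\{y: p(y,S)\geq U\}$; $K(S,S')$ denotes its transition kernel. The volume-biased ESP is the Markov chain on nonempty subsets with kernel $\widehat K(S,S')=\frac{\mu(S')}{\mu(S)}K(S,S')$; $\widehat{\mathbf E}_{S_0}$ denotes expectation for it started at $S_0$. *)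

theory Defs
  imports "HOL-Analysis.Analysis"
begin

definition simple_graph :: "'a set \<Rightarrow> ('a \<Rightarrow> 'a \<Rightarrow> bool) \<Rightarrow> bool" where
  "simple_graph V E \<longleftrightarrow> finite V \<and> (\<forall>x y. E x y \<longrightarrow> x \<in> V \<and> y \<in> V)
     \<and> (\<forall>x y. E x y \<longrightarrow> E y x) \<and> (\<forall>x. \<not> E x x)"

definition deg :: "'a set \<Rightarrow> ('a \<Rightarrow> 'a \<Rightarrow> bool) \<Rightarrow> 'a \<Rightarrow> nat" where
  "deg V E x = card {y \<in> V. E x y}"

definition vol :: "'a set \<Rightarrow> ('a \<Rightarrow> 'a \<Rightarrow> bool) \<Rightarrow> 'a set \<Rightarrow> real" where
  "vol V E S = (\<Sum>x\<in>S. real (deg V E x))"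

definition bdry :: "'a set \<Rightarrow> ('a \<Rightarrow> 'a \<Rightarrow> bool) \<Rightarrow> 'a set \<Rightarrow> real" where
  "bdry V E S = real (card {(x, y). x \<in> S \<and> y \<in> V - S \<and> E x y})"

definition lazy_p :: "'a set \<Rightarrow> ('a \<Rightarrow> 'a \<Rightarrow> bool) \<Rightarrow> 'a \<Rightarrow> 'a \<Rightarrow> real" where
  "lazy_p V E x y = (if E x y then 1 / (2 * real (deg V E x)) else if x = y then 1/2 else 0)"

definition lazy_pS :: "'a set \<Rightarrow> ('a \<Rightarrow> 'a \<Rightarrow> bool) \<Rightarrow> 'a \<Rightarrow> 'a set \<Rightarrow> real" where
  "lazy_pS V E x S = (\<Sum>y\<in>S. lazy_p V E x y)"

text \<open>Evolving set process kernel: K(S,S') = P(U uniform on [0,1] gives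
{y \<in> V. p(y,S) \<ge> U} = S').\<close>
definition esp_K :: "'a set \<Rightarrow> ('a \<Rightarrow> 'a \<Rightarrow> bool) \<Rightarrow> 'a set \<Rightarrow> 'a set \<Rightarrow> real" where
  "esp_K V E S S' = measure lborel ({0..1} \<inter> {u::real. {y \<in> V. lazy_pS V E y S \<ge> u} = S'})"

definition esp_Khat :: "'a set \<Rightarrow> ('a \<Rightarrow> 'a \<Rightarrow> bool) \<Rightarrow> 'a set \<Rightarrow> 'a set \<Rightarrow> real" where
  "esp_Khat V E S S' = vol V E S' / vol V E S * esp_K V E S S'"

definition paths :: "'a set \<Rightarrow> nat \<Rightarrow> 'a set \<Rightarrow> (nat \<Rightarrow> 'a set) set" where
  "paths V T S0 = PiE {..T} (\<lambda>i. if i = 0 then {S0} else Pow V)"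

definition path_prob :: "'a set \<Rightarrow> ('a \<Rightarrow> 'a \<Rightarrow> bool) \<Rightarrow> nat \<Rightarrow> (nat \<Rightarrow> 'a set) \<Rightarrow> real" where
  "path_prob V E T s = (\<Prod>i\<in>{1..T}. esp_Khat V E (s (i - 1)) (s i))"

definition bounded_stopping_time ::
    "'a set \<Rightarrow> nat \<Rightarrow> 'a set \<Rightarrow> ((nat \<Rightarrow> 'a set) \<Rightarrow> nat) \<Rightarrow> bool" where
  "bounded_stopping_time V T S0 \<tau> \<longleftrightarrow>
     (\<forall>s\<in>paths V T S0. \<tau> s \<le> T) \<and>
     (\<forall>s\<in>paths V T S0. \<forall>s'\<in>paths V T S0. \<forall>t.
        (\<forall>i\<le>t. s i = s' i) \<longrightarrow> (\<tau> s = t \<longleftrightarrow> \<tau> s' = t))"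

definition symdiff :: "'a set \<Rightarrow> 'a set \<Rightarrow> 'a set" where
  "symdiff A B = (A - B) \<union> (B - A)"

definition cost :: "'a set \<Rightarrow> ('a \<Rightarrow> 'a \<Rightarrow> bool) \<Rightarrow> (nat \<Rightarrow> 'a set) \<Rightarrow> nat \<Rightarrow> real" where
  "cost V E s t = vol V E (s 0) +
     (\<Sum>j\<in>{1..t}. vol V E (symdiff (s j) (s (j - 1))) + bdry V E (s (j - 1)))"

definition vb_expect ::
    "'a set \<Rightarrow> ('a \<Rightarrow> 'a \<Rightarrow> bool) \<Rightarrow> nat \<Rightarrow> 'a set \<Rightarrow> ((nat \<Rightarrow> 'a set) \<Rightarrow> real) \<Rightarrow> real" where
  "vb_expect V E T S0 f = (\<Sum>s\<in>paths V T S0. path_prob V E T s * f s)"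

end

theory Submission
  imports Defs
begin

(* Write phi(S) = bdry S / vol S. The proof follows the potential-function argument:
   (A) The ratio M_t = cost(S_0..S_t) / vol(S_t) starts at 1, and one step of the
       volume-biased ESP increases it in expectation by at most 2 phi(S_t); this uses the
       martingale identity E_K[vol S'] = vol S and E_K[vol (S' \<Delta> S)] = bdry S for the
       plain ESP kernel K, together with Khat(S,S') = vol S' / vol S * K(S,S').
   (B) One step increases ln vol(S_t) in expectation by at least phi(S_t)^2 / 4 (by
       r ln r \<ge> 2r - 2 sqrt r and the bound E_K[sqrt (vol S' / vol S)] \<le> 1 - phi^2/8,
       obtained by splitting the threshold U at 1/2). Since ln vol(S_t) \<le> ln vol V, the
       expected sum of phi(S_j)^2 up to a stopping time is at most 4 ln vol V.
   (C) Cauchy-Schwarz in time (tau \<le> T) and in probability turns (B) into a bound on the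
       expected sum of phi(S_j), which inserted into (A) gives 1 + 4 sqrt (T ln vol V).
   Steps (A) and (B) pass from per-step drifts to the stopped sums via an optional
   stopping identity for sums of adapted increments, proved by induction on the horizon T
   using the decomposition of a trajectory into its first step and the remaining path. *)

lemma emeasure_unit_finite: "A \<subseteq> {0..1::real} \<Longrightarrow> emeasure lborel A \<noteq> \<infinity>"
  using emeasure_mono[of A "{0..1::real}" lborel] by (auto simp: top_unique)

lemma measure_unit_le: "0 \<le> q \<Longrightarrow> q \<le> 1 \<Longrightarrow> measure lborel ({0..1} \<inter> {..q::real}) = q"
proof -
  assume "0 \<le> q" "q \<le> 1"
  hence "{0..1} \<inter> {..q} = {0..q}" by auto
  thus ?thesis using \<open>0 \<le> q\<close> by simp
qed

lemma sum_sqrt_le: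
  fixes w x :: "'b \<Rightarrow> real"
  assumes "\<And>i. i \<in> A \<Longrightarrow> w i \<ge> 0" "\<And>i. i \<in> A \<Longrightarrow> x i \<ge> 0"
  shows "(\<Sum>i\<in>A. w i * sqrt (x i)) \<le> sqrt ((\<Sum>i\<in>A. w i) * (\<Sum>i\<in>A. w i * x i))"
proof -
  have "(\<Sum>i\<in>A. sqrt (w i) * (sqrt (w i) * sqrt (x i)))\<^sup>2
      \<le> (\<Sum>i\<in>A. (sqrt (w i))\<^sup>2) * (\<Sum>i\<in>A. (sqrt (w i) * sqrt (x i))\<^sup>2)"
    by (rule Cauchy_Schwarz_ineq_sum)
  also have "(\<Sum>i\<in>A. sqrt (w i) * (sqrt (w i) * sqrt (x i))) = (\<Sum>i\<in>A. w i * sqrt (x i))"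
    using assms by (intro sum.cong) (auto simp: mult.assoc[symmetric])
  also have "(\<Sum>i\<in>A. (sqrt (w i))\<^sup>2) * (\<Sum>i\<in>A. (sqrt (w i) * sqrt (x i))\<^sup>2)
           = (\<Sum>i\<in>A. w i) * (\<Sum>i\<in>A. w i * x i)"
    using assms by (intro arg_cong2[where f="(*)"] sum.cong) (auto simp: power_mult_distrib)
  finally show ?thesis by (rule real_le_rsqrt)
qed

text \<open>The two halves of the threshold contribute sqrt((1 \<plusminus> f)/4) each; their sum
  falls below 1 by a quadratic amount in f.\<close>
lemma sqrt_half_sum_le:
  fixes f :: real
  assumes "0 \<le> f" "f \<le> 1"
  shows "sqrt ((1+f)/4) + sqrt ((1-f)/4) \<le> 1 - f\<^sup>2/8"
proof -
  define a where "a = sqrt ((1+f)/4)"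
  define b where "b = sqrt ((1-f)/4)"
  have f2: "f\<^sup>2 \<le> 1" using assms by (simp add: power_le_one)
  have a2: "a\<^sup>2 = (1+f)/4" and b2: "b\<^sup>2 = (1-f)/4" using assms by (simp_all add: a_def b_def)
  have ab: "a * b = sqrt (1 - f\<^sup>2) / 4"
    unfolding a_def b_def
    by (simp add: real_sqrt_mult[symmetric] real_sqrt_divide algebra_simps power2_eq_square)
  have "sqrt (1 - f\<^sup>2) \<le> sqrt ((1 - f\<^sup>2/2)\<^sup>2)"
    by (rule real_sqrt_le_mono) (use assms(1) in \<open>simp add: power2_eq_square algebra_simps\<close>)
  hence s: "sqrt (1 - f\<^sup>2) \<le> 1 - f\<^sup>2/2" using f2 by simp
  have "(a + b)\<^sup>2 = a\<^sup>2 + b\<^sup>2 + 2 * (a * b)" by (simp add: power2_eq_square algebra_simps)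
  also have "\<dots> \<le> 1 - f\<^sup>2/4" using a2 b2 ab s by simp
  also have "\<dots> \<le> (1 - f\<^sup>2/8)\<^sup>2"
    by (simp add: power2_eq_square algebra_simps) (use assms(1) in \<open>simp add: mult_nonneg_nonneg\<close>)
  finally have "(a + b)\<^sup>2 \<le> (1 - f\<^sup>2/8)\<^sup>2" .
  moreover have "0 \<le> 1 - f\<^sup>2/8" using f2 by simp
  ultimately have "a + b \<le> 1 - f\<^sup>2/8" by (rule power2_le_imp_le)
  thus ?thesis by (simp only: a_def b_def)
qed

text \<open>A lower bound for r ln r (from ln x \<le> x - 1 at x = 1/sqrt r).\<close>
lemma r_ln_r_ge:
  fixes r :: real assumes r: "r > 0"
  shows "2 * r - 2 * sqrt r \<le> r * ln r"
proof -
  have sp: "sqrt r > 0" using r by simp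
  have "ln (1 / sqrt r) \<le> 1 / sqrt r - 1" using sp by (intro ln_le_minus_one) simp
  moreover have "ln (1 / sqrt r) = - ln r / 2" using r by (simp add: ln_div ln_sqrt)
  ultimately have "2 - 2 / sqrt r \<le> ln r" by simp
  hence "r * (2 - 2 / sqrt r) \<le> r * ln r" using r by (intro mult_left_mono) auto
  moreover have "r * (2 - 2 / sqrt r) = 2 * r - 2 * sqrt r"
    using sp r by (simp add: field_simps)
  ultimately show ?thesis by simp
qed

definition pcons :: "'b \<Rightarrow> (nat \<Rightarrow> 'b) \<Rightarrow> nat \<Rightarrow> 'b" where
  "pcons S0 s = (\<lambda>i. if i = 0 then S0 else s (i - 1))"

lemma pcons_0[simp]: "pcons S0 s 0 = S0" by (simp add: pcons_def)
lemma pcons_Suc[simp]: "pcons S0 s (Suc i) = s i" by (simp add: pcons_def)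

lemma pcons_agree: "(\<forall>i\<le>t. s i = s' i) \<Longrightarrow> (\<forall>i\<le>Suc t. pcons S0 s i = pcons S0 s' i)"
  by (auto simp: pcons_def)

lemma paths_mem: "s \<in> paths V T S0 \<Longrightarrow> i \<le> T \<Longrightarrow> s i \<in> (if i = 0 then {S0} else Pow V)"
  unfolding paths_def by (rule PiE_mem) auto

lemma paths_arb: "s \<in> paths V T S0 \<Longrightarrow> i > T \<Longrightarrow> s i = undefined"
  unfolding paths_def by (rule PiE_arb) auto

lemma paths_I:
  "(\<And>i. i \<le> T \<Longrightarrow> s i \<in> (if i = 0 then {S0} else Pow V)) \<Longrightarrow> (\<And>i. i > T \<Longrightarrow> s i = undefined)
   \<Longrightarrow> s \<in> paths V T S0"
  unfolding paths_def by (rule PiE_I) auto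

lemma paths_0: "s \<in> paths V T S0 \<Longrightarrow> s 0 = S0"
  using paths_mem[of s V T S0 0] by simp

lemma paths_sub: "s \<in> paths V T S0 \<Longrightarrow> S0 \<subseteq> V \<Longrightarrow> i \<le> T \<Longrightarrow> s i \<subseteq> V"
  using paths_mem[of s V T S0 i] by (cases "i = 0") auto

lemma finite_paths: "finite V \<Longrightarrow> finite (paths V T S0)"
  unfolding paths_def by (intro finite_PiE) auto

lemma paths_ne: "paths V T S0 \<noteq> {}"
  unfolding paths_def by (auto simp: PiE_eq_empty_iff)

lemma pcons_in: "S1 \<in> Pow V \<Longrightarrow> s \<in> paths V T S1 \<Longrightarrow> pcons S0 s \<in> paths V (Suc T) S0"
proof (rule paths_I)
  fix i assume S1: "S1 \<in> Pow V" and s: "s \<in> paths V T S1" and i: "i \<le> Suc T"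
  show "pcons S0 s i \<in> (if i = 0 then {S0} else Pow V)"
  proof (cases i)
    case (Suc k)
    hence "s k \<in> (if k = 0 then {S1} else Pow V)" using i by (intro paths_mem[OF s]) simp
    thus ?thesis using S1 Suc by (cases "k = 0") auto
  qed simp
next
  fix i assume s: "s \<in> paths V T S1" and i: "i > Suc T"
  then obtain k where "i = Suc k" "k > T" by (cases i) auto
  thus "pcons S0 s i = undefined" using paths_arb[OF s] by simp
qed

lemma paths_Suc: "paths V (Suc T) S0 = (\<lambda>(S1, s). pcons S0 s) ` (SIGMA S1:Pow V. paths V T S1)"
proof
  show "(\<lambda>(S1, s). pcons S0 s) ` (SIGMA S1:Pow V. paths V T S1) \<subseteq> paths V (Suc T) S0"
    using pcons_in by auto
next
  show "paths V (Suc T) S0 \<subseteq> (\<lambda>(S1, s). pcons S0 s) ` (SIGMA S1:Pow V. paths V T S1)"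
  proof
    fix c assume c: "c \<in> paths V (Suc T) S0"
    define s where "s = (\<lambda>i. if i \<le> T then c (Suc i) else undefined)"
    have cc: "c i \<in> (if i = 0 then {S0} else Pow V)" if "i \<le> Suc T" for i
      by (rule paths_mem[OF c that])
    have "s \<in> paths V T (c 1)"
    proof (rule paths_I)
      fix i assume "i \<le> T"
      thus "s i \<in> (if i = 0 then {c 1} else Pow V)" using cc[of "Suc i"] by (simp add: s_def)
    qed (simp add: s_def)
    moreover have "c 1 \<in> Pow V" using cc[of 1] by auto
    moreover have "pcons S0 s = c"
    proof
      fix i show "pcons S0 s i = c i"
        using cc[of 0] paths_arb[OF c, of i] by (cases i) (auto simp: s_def)
    qed
    ultimately show "c \<in> (\<lambda>(S1, s). pcons S0 s) ` (SIGMA S1:Pow V. paths V T S1)"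
      by (auto intro!: image_eqI[where x="(c 1, s)"])
  qed
qed

lemma pcons_inj: "inj_on (\<lambda>(S1, s). pcons S0 s) (SIGMA S1:Pow V. paths V T S1)"
proof (rule inj_onI, clarify)
  fix S1 s S1' s'
  assume s: "s \<in> paths V T S1" and s': "s' \<in> paths V T S1'" and eq: "pcons S0 s = pcons S0 s'"
  have "s = s'"
  proof
    fix i show "s i = s' i" using fun_cong[OF eq, of "Suc i"] by simp
  qed
  thus "S1 = S1' \<and> s = s'" using paths_0[OF s] paths_0[OF s'] by simp
qed

lemma path_prob_pcons:
  "path_prob V E (Suc T) (pcons S0 s) = esp_Khat V E S0 (s 0) * path_prob V E T s"
proof -
  have "path_prob V E (Suc T) (pcons S0 s)
      = esp_Khat V E S0 (s 0) * (\<Prod>i\<in>{Suc 1..Suc T}. esp_Khat V E (pcons S0 s (i - 1)) (pcons S0 s i))"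
    unfolding path_prob_def by (subst prod.atLeast_Suc_atMost) auto
  also have "(\<Prod>i\<in>{Suc 1..Suc T}. esp_Khat V E (pcons S0 s (i - 1)) (pcons S0 s i)) = path_prob V E T s"
    unfolding path_prob_def prod.shift_bounds_cl_Suc_ivl by (intro prod.cong) (auto simp: pcons_def)
  finally show ?thesis .
qed

locale sgraph =
  fixes V :: "'a set" and E :: "'a \<Rightarrow> 'a \<Rightarrow> bool"
  assumes sg: "simple_graph V E" and degpos: "\<forall>x\<in>V. deg V E x > 0"
begin

lemma finV: "finite V" using sg by (simp add: simple_graph_def)
lemma Esym: "E x y \<Longrightarrow> E y x" using sg by (simp add: simple_graph_def)
lemma Eirr: "\<not> E x x" using sg by (simp add: simple_graph_def)

lemma finite_subV: "S \<subseteq> V \<Longrightarrow> finite S"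
  using finV by (rule finite_subset[rotated])

abbreviation dg :: "'a \<Rightarrow> real" where "dg y \<equiv> real (deg V E y)"

definition nb :: "'a set \<Rightarrow> 'a \<Rightarrow> nat" where "nb S y = card {z\<in>S. E y z}"

lemma deg_split: "S \<subseteq> V \<Longrightarrow> deg V E y = nb S y + nb (V - S) y"
proof -
  assume S: "S \<subseteq> V"
  have "{z\<in>V. E y z} = {z\<in>S. E y z} \<union> {z\<in>V-S. E y z}" using S by auto
  moreover have "finite {z\<in>S. E y z}" "finite {z\<in>V-S. E y z}" using finV S
    by (auto intro: finite_subset)
  ultimately show ?thesis unfolding deg_def nb_def
    by (simp add: card_Un_disjoint disjoint_iff)
qed

lemma lazy_pS_formula:
  assumes "S \<subseteq> V" "y \<in> V"
  shows "lazy_pS V E y S = real (nb S y) / (2 * dg y) + (if y \<in> S then 1/2 else 0)"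
proof -
  have fS: "finite S" using assms(1) by (rule finite_subV)
  have "lazy_pS V E y S = (\<Sum>z\<in>S. (if E y z then 1 / (2 * dg y) else 0) + (if z = y then 1/2 else 0))"
    unfolding lazy_pS_def lazy_p_def by (rule sum.cong) (auto simp: Eirr)
  also have "\<dots> = real (nb S y) / (2 * dg y) + (if y \<in> S then 1/2 else 0)"
    using fS by (simp add: sum.distrib sum.If_cases nb_def Collect_conj_eq Int_commute sum.delta')
  finally show ?thesis .
qed

lemma deg_times_lazy_pS:
  "S \<subseteq> V \<Longrightarrow> y \<in> V \<Longrightarrow> dg y * lazy_pS V E y S = real (nb S y) / 2 + (if y \<in> S then dg y / 2 else 0)"
  using lazy_pS_formula[of S y] degpos by (auto simp: field_simps)

lemma lazy_pS_bounds:
  assumes "S \<subseteq> V" "y \<in> V"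
  shows "0 \<le> lazy_pS V E y S" "lazy_pS V E y S \<le> 1"
    "y \<in> S \<Longrightarrow> lazy_pS V E y S \<ge> 1/2" "y \<notin> S \<Longrightarrow> lazy_pS V E y S \<le> 1/2"
proof -
  have d: "dg y > 0" using degpos assms by auto
  have "real (nb S y) / (2 * dg y) \<le> 1/2"
    using deg_split[OF assms(1), of y] d by (simp add: divide_simps)
  moreover have "real (nb S y) / (2 * dg y) \<ge> 0" using d by simp
  ultimately show "0 \<le> lazy_pS V E y S" "lazy_pS V E y S \<le> 1"
    "y \<in> S \<Longrightarrow> lazy_pS V E y S \<ge> 1/2" "y \<notin> S \<Longrightarrow> lazy_pS V E y S \<le> 1/2"
    using lazy_pS_formula[OF assms] by auto
qed

lemma vol_nonneg: "vol V E S \<ge> 0" by (simp add: vol_def sum_nonneg)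

lemma vol_ge1: "S \<subseteq> V \<Longrightarrow> S \<noteq> {} \<Longrightarrow> vol V E S \<ge> 1"
proof -
  assume S: "S \<subseteq> V" "S \<noteq> {}"
  then obtain x where x: "x \<in> S" by auto
  have "vol V E S \<ge> dg x" unfolding vol_def
    using finite_subV[OF S(1)] x by (intro member_le_sum) auto
  moreover have "deg V E x \<ge> 1" using degpos S x by (simp add: Suc_le_eq subset_iff)
  ultimately show ?thesis by linarith
qed

lemma vol_mono: "S \<subseteq> S' \<Longrightarrow> S' \<subseteq> V \<Longrightarrow> vol V E S \<le> vol V E S'"
  unfolding vol_def using finV by (intro sum_mono2) (auto intro: finite_subset)

lemma vol_as_sum: "S' \<subseteq> V \<Longrightarrow> vol V E S' = (\<Sum>y\<in>V. dg y * (if y \<in> S' then 1 else 0))"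
  unfolding vol_def using finV by (simp add: if_distrib sum.If_cases Int_absorb2 Int_commute cong: if_cong)

lemma bdry_inside: "S \<subseteq> V \<Longrightarrow> bdry V E S = (\<Sum>x\<in>S. real (nb (V - S) x))"
proof -
  assume S: "S \<subseteq> V"
  have "{(x, y). x \<in> S \<and> y \<in> V - S \<and> E x y} = Sigma S (\<lambda>x. {y\<in>V-S. E x y})" by auto
  thus ?thesis unfolding bdry_def nb_def using finite_subV[OF S] finV by (simp add: card_SigmaI)
qed

lemma bdry_outside: "S \<subseteq> V \<Longrightarrow> bdry V E S = (\<Sum>y\<in>V-S. real (nb S y))"
proof -
  assume S: "S \<subseteq> V"
  have "{(x, y). x \<in> S \<and> y \<in> V - S \<and> E x y} = prod.swap ` Sigma (V-S) (\<lambda>y. {x\<in>S. E y x})"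
    using Esym by (auto simp: image_iff)
  hence "card {(x, y). x \<in> S \<and> y \<in> V - S \<and> E x y} = card (Sigma (V-S) (\<lambda>y. {x\<in>S. E y x}))"
    by (simp add: card_image)
  also have "\<dots> = (\<Sum>y\<in>V-S. card {x\<in>S. E y x})"
    using finite_subV[OF S] finV by (simp add: card_SigmaI)
  finally show ?thesis unfolding bdry_def nb_def by simp
qed

lemma bdry_nonneg: "bdry V E S \<ge> 0" by (simp add: bdry_def)

lemma bdry_le_vol: "S \<subseteq> V \<Longrightarrow> bdry V E S \<le> vol V E S"
  unfolding bdry_inside vol_def using deg_split by (intro sum_mono) force

lemma sum_nb_inside: "S \<subseteq> V \<Longrightarrow> (\<Sum>y\<in>S. real (nb S y)) = vol V E S - bdry V E S"
proof -
  assume S: "S \<subseteq> V"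
  have "(\<Sum>y\<in>S. real (nb S y)) = (\<Sum>y\<in>S. dg y - real (nb (V-S) y))"
    using deg_split[OF S] by (intro sum.cong) auto
  thus ?thesis using bdry_inside[OF S] by (simp add: vol_def sum_subtractf)
qed

lemma sum_split: "S \<subseteq> V \<Longrightarrow> (\<Sum>y\<in>V. f y) = (\<Sum>y\<in>S. f y) + (\<Sum>y\<in>V-S. f y)"
  using finV by (metis sum.subset_diff add.commute)

text \<open>The ESP step as a function of the uniform threshold u, and the ESP kernel restricted
  to thresholds in a set I. Splitting I at 1/2 is what drives the square-root bound.\<close>
definition esp_step :: "'a set \<Rightarrow> real \<Rightarrow> 'a set" where
  "esp_step S u = {y\<in>V. lazy_pS V E y S \<ge> u}"

definition KI :: "real set \<Rightarrow> 'a set \<Rightarrow> 'a set \<Rightarrow> real" where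
  "KI I S S' = measure lborel (I \<inter> {u. esp_step S u = S'})"

lemma esp_K_KI: "esp_K V E S S' = KI {0..1} S S'"
  unfolding esp_K_def KI_def esp_step_def ..

lemma KI_nonneg: "KI I S S' \<ge> 0" by (simp add: KI_def)

lemma K_nonneg: "esp_K V E S S' \<ge> 0" by (simp add: esp_K_def)

lemma esp_step_borel: "{u::real. esp_step S u = S'} \<in> sets borel"
proof (cases "S' \<subseteq> V")
  case True
  have "{u::real. esp_step S u = S'} = {u::real. \<forall>y\<in>V. (u \<le> lazy_pS V E y S) = (y \<in> S')}"
    using True unfolding esp_step_def by auto
  also have "\<dots> \<in> sets borel" using finV by measurable
  finally show ?thesis .
next
  case False
  hence "{u::real. esp_step S u = S'} = {}" unfolding esp_step_def by auto
  thus ?thesis by simp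
qed


lemma sum_KI:
  assumes B: "B \<subseteq> Pow V" and I: "I \<in> sets borel" "I \<subseteq> {0..1}"
  shows "(\<Sum>S'\<in>B. KI I S S') = measure lborel (I \<inter> {u. esp_step S u \<in> B})"
proof -
  have fB: "finite B" using B finV by (meson finite_Pow_iff finite_subset)
  have eq: "I \<inter> {u. esp_step S u \<in> B} = (\<Union>S'\<in>B. I \<inter> {u. esp_step S u = S'})" by auto
  have "measure lborel (\<Union>S'\<in>B. I \<inter> {u. esp_step S u = S'})
      = (\<Sum>S'\<in>B. measure lborel (I \<inter> {u. esp_step S u = S'}))"
    using I esp_step_borel
    by (intro measure_finite_Union[OF fB] emeasure_unit_finite) (auto simp: disjoint_family_on_def)
  thus ?thesis unfolding eq KI_def by simp
qed

lemma KI_total: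
  "I \<in> sets borel \<Longrightarrow> I \<subseteq> {0..1} \<Longrightarrow> (\<Sum>S'\<in>Pow V. KI I S S') = measure lborel I"
  using sum_KI[of "Pow V" I S] by (simp add: esp_step_def)

text \<open>Linear functionals of the target set: vertex y lies in the new set exactly when
  the threshold is at most p(y,S).\<close>
lemma KI_linear:
  assumes I: "I \<in> sets borel" "I \<subseteq> {0..1}"
  shows "(\<Sum>S'\<in>Pow V. KI I S S' * (\<Sum>y\<in>V. c y * (if y \<in> S' then 1 else 0)))
       = (\<Sum>y\<in>V. c y * measure lborel (I \<inter> {..lazy_pS V E y S}))"
proof -
  have mem: "(\<Sum>S'\<in>Pow V. KI I S S' * (if y \<in> S' then 1 else 0)) = measure lborel (I \<inter> {..lazy_pS V E y S})"
    if y: "y \<in> V" for y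
  proof -
    have "(\<Sum>S'\<in>Pow V. KI I S S' * (if y \<in> S' then 1 else 0)) = (\<Sum>S'\<in>{S'\<in>Pow V. y \<in> S'}. KI I S S')"
      using finV by (simp add: sum.inter_filter[symmetric] if_distrib cong: if_cong)
    also have "\<dots> = measure lborel (I \<inter> {u. esp_step S u \<in> {S'\<in>Pow V. y \<in> S'}})"
      by (rule sum_KI[OF _ I]) auto
    also have "I \<inter> {u. esp_step S u \<in> {S'\<in>Pow V. y \<in> S'}} = I \<inter> {..lazy_pS V E y S}"
      using y unfolding esp_step_def by auto
    finally show ?thesis .
  qed
  have "(\<Sum>S'\<in>Pow V. KI I S S' * (\<Sum>y\<in>V. c y * (if y \<in> S' then 1 else 0)))
      = (\<Sum>y\<in>V. c y * (\<Sum>S'\<in>Pow V. KI I S S' * (if y \<in> S' then 1 else 0)))"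
    by (simp add: sum_distrib_left sum.swap[of _ "Pow V"] mult_ac)
  thus ?thesis using mem by simp
qed

lemma KI_split: "KI {0..1} S S' = KI {0..1/2} S S' + KI {1/2<..1} S S'"
proof -
  have "{0..1} \<inter> {u. esp_step S u = S'} = ({0..1/2} \<inter> {u. esp_step S u = S'}) \<union> ({1/2<..1} \<inter> {u. esp_step S u = S'})"
    by auto
  moreover have "measure lborel (({0..1/2} \<inter> {u. esp_step S u = S'}) \<union> ({1/2<..1} \<inter> {u. esp_step S u = S'}))
     = measure lborel ({0..1/2} \<inter> {u. esp_step S u = S'}) + measure lborel ({1/2<..1} \<inter> {u. esp_step S u = S'})"
    using esp_step_borel by (intro measure_Union emeasure_unit_finite) auto
  ultimately show ?thesis unfolding KI_def by simp
qed

lemma K_total: "(\<Sum>S'\<in>Pow V. esp_K V E S S') = 1"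
  using KI_total[of "{0..1}" S] by (simp add: esp_K_KI)

lemma KI_lower_total: "(\<Sum>S'\<in>Pow V. KI {0..1/2} S S') = 1/2"
  using KI_total[of "{0..1/2}" S] by simp

lemma KI_upper_total: "(\<Sum>S'\<in>Pow V. KI {1/2<..1} S S') = 1/2"
proof -
  have "{1/2<..1::real} \<subseteq> {0..1}" by auto
  thus ?thesis using KI_total[of "{1/2<..1}" S] by simp
qed

lemma K_vol:
  assumes S: "S \<subseteq> V"
  shows "(\<Sum>S'\<in>Pow V. esp_K V E S S' * vol V E S') = vol V E S"
proof -
  have "(\<Sum>S'\<in>Pow V. esp_K V E S S' * vol V E S') = (\<Sum>S'\<in>Pow V. KI {0..1} S S' * (\<Sum>y\<in>V. dg y * (if y \<in> S' then 1 else 0)))"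
    by (intro sum.cong) (auto simp: esp_K_KI vol_as_sum)
  also have "\<dots> = (\<Sum>y\<in>V. dg y * measure lborel ({0..1} \<inter> {..lazy_pS V E y S}))"
    by (rule KI_linear) auto
  also have "\<dots> = (\<Sum>y\<in>V. dg y * lazy_pS V E y S)"
    using lazy_pS_bounds[OF S] by (intro sum.cong) (auto simp: measure_unit_le)
  also have "\<dots> = (\<Sum>y\<in>S. real (nb S y) / 2 + dg y / 2) + (\<Sum>y\<in>V-S. real (nb S y) / 2)"
    unfolding sum_split[OF S] using deg_times_lazy_pS[OF S] S
    by (intro arg_cong2[where f="(+)"] sum.cong) auto
  also have "\<dots> = vol V E S"
    using sum_nb_inside[OF S] bdry_outside[OF S]
    by (simp add: sum.distrib vol_def sum_divide_distrib[symmetric]) (simp add: field_simps)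
  finally show ?thesis .
qed

text \<open>Thresholds u \<le> 1/2 only enlarge S: they add half of the boundary volume.\<close>
lemma KI_lower_vol:
  assumes S: "S \<subseteq> V"
  shows "(\<Sum>S'\<in>Pow V. KI {0..1/2} S S' * vol V E S') = (vol V E S + bdry V E S) / 2"
proof -
  have meas: "measure lborel ({0..1/2} \<inter> {..q}) = min q (1/2)" if "0 \<le> q" for q :: real
  proof -
    have "{0..1/2} \<inter> {..q} = {0..min q (1/2)}" by auto
    thus ?thesis using that by simp
  qed
  have low: "dg y * min (lazy_pS V E y S) (1/2) = (if y \<in> S then dg y / 2 else real (nb S y) / 2)"
    if y: "y \<in> V" for y
    using lazy_pS_bounds[OF S y] deg_times_lazy_pS[OF S y] by (auto simp: min_def)
  have "(\<Sum>S'\<in>Pow V. KI {0..1/2} S S' * vol V E S') = (\<Sum>S'\<in>Pow V. KI {0..1/2} S S' * (\<Sum>y\<in>V. dg y * (if y \<in> S' then 1 else 0)))"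
    by (intro sum.cong) (auto simp: vol_as_sum)
  also have "\<dots> = (\<Sum>y\<in>V. dg y * measure lborel ({0..1/2} \<inter> {..lazy_pS V E y S}))"
    by (rule KI_linear) auto
  also have "\<dots> = (\<Sum>y\<in>V. dg y * min (lazy_pS V E y S) (1/2))"
    using meas lazy_pS_bounds[OF S] by (intro sum.cong) auto
  also have "\<dots> = (\<Sum>y\<in>S. dg y / 2) + (\<Sum>y\<in>V-S. real (nb S y) / 2)"
    unfolding sum_split[OF S] using low S by (intro arg_cong2[where f="(+)"] sum.cong refl) (simp_all add: subset_iff)
  also have "\<dots> = (vol V E S + bdry V E S) / 2"
    using bdry_outside[OF S] by (simp add: vol_def sum_divide_distrib[symmetric] add_divide_distrib)
  finally show ?thesis .
qed

lemma KI_upper_vol: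
  assumes S: "S \<subseteq> V"
  shows "(\<Sum>S'\<in>Pow V. KI {1/2<..1} S S' * vol V E S') = (vol V E S - bdry V E S) / 2"
proof -
  have "(\<Sum>S'\<in>Pow V. esp_K V E S S' * vol V E S')
      = (\<Sum>S'\<in>Pow V. KI {0..1/2} S S' * vol V E S') + (\<Sum>S'\<in>Pow V. KI {1/2<..1} S S' * vol V E S')"
    by (simp add: esp_K_KI KI_split distrib_right sum.distrib)
  thus ?thesis using K_vol[OF S] KI_lower_vol[OF S] by (simp add: field_simps)
qed

lemma K_symdiff:
  assumes S: "S \<subseteq> V"
  shows "(\<Sum>S'\<in>Pow V. esp_K V E S S' * vol V E (symdiff S' S)) = bdry V E S"
proof -
  define c where "c y = (if y \<in> S then - dg y else dg y)" for y
  have vsd: "vol V E (symdiff S' S) = vol V E S + (\<Sum>y\<in>V. c y * (if y \<in> S' then 1 else 0))"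
    if S': "S' \<subseteq> V" for S'
  proof -
    have "symdiff S' S \<subseteq> V" using S S' by (auto simp: symdiff_def)
    thus ?thesis unfolding vol_as_sum[OF S] sum.distrib[symmetric]
      by (simp add: vol_as_sum) (intro sum.cong, auto simp: symdiff_def c_def)
  qed
  have "(\<Sum>S'\<in>Pow V. esp_K V E S S' * vol V E (symdiff S' S))
      = (\<Sum>S'\<in>Pow V. esp_K V E S S' * vol V E S + KI {0..1} S S' * (\<Sum>y\<in>V. c y * (if y \<in> S' then 1 else 0)))"
    by (intro sum.cong) (auto simp: vsd esp_K_KI distrib_left)
  also have "\<dots> = vol V E S + (\<Sum>y\<in>V. c y * lazy_pS V E y S)"
    using lazy_pS_bounds[OF S]
    by (simp add: sum.distrib KI_linear sum_distrib_right[symmetric] K_total measure_unit_le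
          cong: sum.cong)
  also have "(\<Sum>y\<in>V. c y * lazy_pS V E y S) = - (\<Sum>y\<in>S. real (nb S y) / 2 + dg y / 2) + (\<Sum>y\<in>V-S. real (nb S y) / 2)"
    unfolding sum_split[OF S] using deg_times_lazy_pS[OF S] S
    by (simp add: sum_negf[symmetric]) (intro arg_cong2[where f="(+)"] sum.cong, auto simp: c_def)
  finally show ?thesis using sum_nb_inside[OF S] bdry_outside[OF S]
    by (simp add: sum.distrib sum_divide_distrib[symmetric] vol_def) (simp add: field_simps)
qed


abbreviation Kh :: "'a set \<Rightarrow> 'a set \<Rightarrow> real" where "Kh \<equiv> esp_Khat V E"

definition phi :: "'a set \<Rightarrow> real" where "phi S = bdry V E S / vol V E S"

lemma phi_nonneg: "phi S \<ge> 0" by (simp add: phi_def bdry_nonneg vol_nonneg)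

lemma Kh_nonneg: "Kh S S' \<ge> 0"
  unfolding esp_Khat_def by (intro mult_nonneg_nonneg divide_nonneg_nonneg vol_nonneg K_nonneg)

lemma Kh_from_empty: "Kh {} S' = 0" unfolding esp_Khat_def by (simp add: vol_def)

lemma Kh_to_empty: "Kh S {} = 0" unfolding esp_Khat_def by (simp add: vol_def)

text \<open>The volume-biased kernel is stochastic because vol is K-harmonic.\<close>
lemma Kh_total: "S \<subseteq> V \<Longrightarrow> S \<noteq> {} \<Longrightarrow> (\<Sum>S'\<in>Pow V. Kh S S') = 1"
proof -
  assume S: "S \<subseteq> V" "S \<noteq> {}"
  have "(\<Sum>S'\<in>Pow V. Kh S S') = (\<Sum>S'\<in>Pow V. esp_K V E S S' * vol V E S') / vol V E S"
    unfolding esp_Khat_def by (simp add: sum_divide_distrib mult_ac)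
  thus ?thesis using K_vol[OF S(1)] vol_ge1[OF S] by simp
qed

text \<open>Under K, the expected square-root volume ratio is at most 1 - phi^2/8: apply
  Cauchy-Schwarz separately on the thresholds below and above 1/2.\<close>
lemma K_sqrt:
  assumes S: "S \<subseteq> V" "S \<noteq> {}"
  shows "(\<Sum>S'\<in>Pow V. esp_K V E S S' * sqrt (vol V E S' / vol V E S)) \<le> 1 - (phi S)\<^sup>2 / 8"
proof -
  define m where "m = vol V E S"
  have m: "m > 0" using vol_ge1[OF S] by (simp add: m_def)
  have f: "0 \<le> phi S" "phi S \<le> 1"
    using phi_nonneg bdry_le_vol[OF S(1)] m by (auto simp: phi_def m_def)
  have half: "(\<Sum>S'\<in>Pow V. KI I S S' * sqrt (vol V E S' / m)) \<le> sqrt (1/2 * (v / 2 / m))"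
    if tot: "(\<Sum>S'\<in>Pow V. KI I S S') = 1/2"
      and vol: "(\<Sum>S'\<in>Pow V. KI I S S' * vol V E S') = v / 2" for I v
  proof -
    have "(\<Sum>S'\<in>Pow V. KI I S S' * sqrt (vol V E S' / m))
        \<le> sqrt ((\<Sum>S'\<in>Pow V. KI I S S') * (\<Sum>S'\<in>Pow V. KI I S S' * (vol V E S' / m)))"
      using m by (intro sum_sqrt_le) (auto simp: KI_nonneg vol_nonneg)
    also have "(\<Sum>S'\<in>Pow V. KI I S S' * (vol V E S' / m)) = (\<Sum>S'\<in>Pow V. KI I S S' * vol V E S') / m"
      by (simp add: sum_divide_distrib)
    also have "\<dots> = v / 2 / m" by (simp only: vol)
    finally show ?thesis by (simp add: tot)
  qed
  have "(\<Sum>S'\<in>Pow V. esp_K V E S S' * sqrt (vol V E S' / m))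
      = (\<Sum>S'\<in>Pow V. KI {0..1/2} S S' * sqrt (vol V E S' / m))
        + (\<Sum>S'\<in>Pow V. KI {1/2<..1} S S' * sqrt (vol V E S' / m))"
    by (simp add: esp_K_KI KI_split distrib_right sum.distrib)
  also have "\<dots> \<le> sqrt (1/2 * ((m + bdry V E S) / 2 / m)) + sqrt (1/2 * ((m - bdry V E S) / 2 / m))"
    using half[OF KI_lower_total KI_lower_vol[OF S(1)]] half[OF KI_upper_total KI_upper_vol[OF S(1)]]
    by (simp add: m_def)
  also have "\<dots> = sqrt ((1 + phi S)/4) + sqrt ((1 - phi S)/4)"
    using m by (simp add: phi_def m_def field_simps)
  also have "\<dots> \<le> 1 - (phi S)\<^sup>2 / 8" using f by (rule sqrt_half_sum_le)
  finally show ?thesis by (simp add: m_def)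
qed

lemma cost_ratio_drift:
  assumes S: "S \<subseteq> V" and C: "C \<ge> 0"
  shows "(\<Sum>S'\<in>Pow V. Kh S S' * (C * (1 / vol V E S' - 1 / vol V E S)
           + (vol V E (symdiff S' S) + bdry V E S) / vol V E S')) \<le> 2 * phi S"
proof (cases "S = {}")
  case True
  thus ?thesis by (simp add: Kh_from_empty phi_def bdry_def)
next
  case False
  define m where "m = vol V E S"
  have m: "m > 0" using vol_ge1[OF S False] by (simp add: m_def)
  define X where "X S' = vol V E (symdiff S' S) + bdry V E S" for S'
  have X: "X S' \<ge> 0" for S' by (simp add: X_def vol_nonneg bdry_nonneg)
  text \<open>Termwise, Khat cancels the 1/vol S' factors (and vanishes when vol S' = 0).\<close>
  have "(\<Sum>S'\<in>Pow V. Kh S S' * (C * (1 / vol V E S' - 1 / m) + X S' / vol V E S'))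
     \<le> (\<Sum>S'\<in>Pow V. esp_K V E S S' * (C / m) - Kh S S' * (C / m) + esp_K V E S S' * X S' / m)"
  proof (rule sum_mono)
    fix S' assume "S' \<in> Pow V"
    show "Kh S S' * (C * (1 / vol V E S' - 1 / m) + X S' / vol V E S')
        \<le> esp_K V E S S' * (C / m) - Kh S S' * (C / m) + esp_K V E S S' * X S' / m"
    proof (cases "vol V E S' = 0")
      case True
      thus ?thesis using K_nonneg[of S S'] X[of S'] C m by (simp add: esp_Khat_def m_def[symmetric])
    next
      case False
      hence "vol V E S' > 0" using vol_nonneg[of S'] by simp
      thus ?thesis unfolding esp_Khat_def m_def[symmetric] using m by (simp add: field_simps)
    qed
  qed
  also have "\<dots> = (C / m) * (\<Sum>S'\<in>Pow V. esp_K V E S S') - (C / m) * (\<Sum>S'\<in>Pow V. Kh S S')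
                  + (\<Sum>S'\<in>Pow V. esp_K V E S S' * X S') / m"
    by (simp add: sum.distrib sum_subtractf sum_distrib_left sum_divide_distrib mult_ac)
  also have "(\<Sum>S'\<in>Pow V. esp_K V E S S' * X S') = 2 * bdry V E S"
    unfolding X_def using K_symdiff[OF S] K_total
    by (simp add: distrib_left sum.distrib sum_distrib_right[symmetric])
  finally show ?thesis using Kh_total[OF S False] K_total by (simp add: m_def X_def phi_def)
qed

lemma log_vol_drift:
  assumes S: "S \<subseteq> V"
  shows "(\<Sum>S'\<in>Pow V. Kh S S' * (ln (vol V E S') - ln (vol V E S))) \<ge> (phi S)\<^sup>2 / 4"
proof (cases "S = {}")
  case True
  thus ?thesis by (simp add: Kh_from_empty phi_def bdry_def)
next
  case False
  define m where "m = vol V E S"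
  have m: "m > 0" using vol_ge1[OF S False] by (simp add: m_def)
  have "(\<Sum>S'\<in>Pow V. esp_K V E S S' * (2 * (vol V E S' / m) - 2 * sqrt (vol V E S' / m)))
      \<le> (\<Sum>S'\<in>Pow V. Kh S S' * (ln (vol V E S') - ln m))"
  proof (rule sum_mono)
    fix S' assume "S' \<in> Pow V"
    show "esp_K V E S S' * (2 * (vol V E S' / m) - 2 * sqrt (vol V E S' / m))
        \<le> Kh S S' * (ln (vol V E S') - ln m)"
    proof (cases "vol V E S' = 0")
      case True
      thus ?thesis by (simp add: esp_Khat_def)
    next
      case False
      hence v: "vol V E S' > 0" using vol_nonneg[of S'] by simp
      have "Kh S S' * (ln (vol V E S') - ln m) = esp_K V E S S' * ((vol V E S' / m) * ln (vol V E S' / m))"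
        unfolding esp_Khat_def m_def[symmetric] using v m by (simp add: ln_div)
      moreover have "esp_K V E S S' * (2 * (vol V E S' / m) - 2 * sqrt (vol V E S' / m))
          \<le> esp_K V E S S' * ((vol V E S' / m) * ln (vol V E S' / m))"
        using v m by (intro mult_left_mono r_ln_r_ge K_nonneg) simp
      ultimately show ?thesis by linarith
    qed
  qed
  moreover have "(\<Sum>S'\<in>Pow V. esp_K V E S S' * (2 * (vol V E S' / m) - 2 * sqrt (vol V E S' / m)))
      = 2 * ((\<Sum>S'\<in>Pow V. esp_K V E S S' * vol V E S') / m) - 2 * (\<Sum>S'\<in>Pow V. esp_K V E S S' * sqrt (vol V E S' / m))"
    by (simp add: sum_subtractf sum_distrib_left sum_divide_distrib right_diff_distrib mult_ac)
  moreover have "(\<Sum>S'\<in>Pow V. esp_K V E S S' * vol V E S') / m = 1" using K_vol[OF S] m by (simp add: m_def)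
  ultimately show ?thesis using K_sqrt[OF S False] by (simp add: m_def)
qed


abbreviation Ev :: "nat \<Rightarrow> 'a set \<Rightarrow> ((nat \<Rightarrow> 'a set) \<Rightarrow> real) \<Rightarrow> real" where
  "Ev \<equiv> vb_expect V E"

lemma Ev_Suc: "Ev (Suc T) S0 f = (\<Sum>S1\<in>Pow V. Kh S0 S1 * Ev T S1 (\<lambda>s. f (pcons S0 s)))"
proof -
  have "Ev (Suc T) S0 f = (\<Sum>(S1, s)\<in>(SIGMA S1:Pow V. paths V T S1). path_prob V E (Suc T) (pcons S0 s) * f (pcons S0 s))"
    unfolding vb_expect_def paths_Suc by (rule sum.reindex_cong[OF pcons_inj refl]) auto
  also have "\<dots> = (\<Sum>S1\<in>Pow V. \<Sum>s\<in>paths V T S1. path_prob V E (Suc T) (pcons S0 s) * f (pcons S0 s))"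
    by (rule sum.Sigma[symmetric]) (use finV finite_paths[OF finV] in auto)
  also have "\<dots> = (\<Sum>S1\<in>Pow V. Kh S0 S1 * Ev T S1 (\<lambda>s. f (pcons S0 s)))"
    unfolding vb_expect_def sum_distrib_left
    by (intro sum.cong refl) (auto simp: path_prob_pcons paths_0 mult_ac)
  finally show ?thesis .
qed

lemma Ev_cong: "(\<And>s. s \<in> paths V T S0 \<Longrightarrow> f s = g s) \<Longrightarrow> Ev T S0 f = Ev T S0 g"
  unfolding vb_expect_def by (intro sum.cong) auto

lemma Ev_add: "Ev T S0 (\<lambda>s. f s + g s) = Ev T S0 f + Ev T S0 g"
  unfolding vb_expect_def by (simp add: distrib_left sum.distrib)

lemma Ev_cmult: "Ev T S0 (\<lambda>s. c * f s) = c * Ev T S0 f"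
  unfolding vb_expect_def by (simp add: sum_distrib_left mult_ac)

lemma path_prob_nonneg: "path_prob V E T s \<ge> 0"
  unfolding path_prob_def by (intro prod_nonneg) (auto intro: Kh_nonneg)

lemma Ev_mono: "(\<And>s. s \<in> paths V T S0 \<Longrightarrow> f s \<le> g s) \<Longrightarrow> Ev T S0 f \<le> Ev T S0 g"
  unfolding vb_expect_def by (intro sum_mono mult_left_mono) (auto intro: path_prob_nonneg)

lemma Ev_one: "S \<subseteq> V \<Longrightarrow> S \<noteq> {} \<Longrightarrow> Ev T S (\<lambda>s. 1) = 1"
proof (induction T arbitrary: S)
  case 0
  have "paths V 0 S = PiE {..0} (\<lambda>i. {S})" unfolding paths_def by (intro PiE_cong) auto
  hence "card (paths V 0 S) = 1" by (simp add: card_PiE)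
  thus ?case by (simp add: vb_expect_def path_prob_def)
next
  case (Suc T)
  have "Ev (Suc T) S (\<lambda>s. 1) = (\<Sum>S1\<in>Pow V. Kh S S1 * Ev T S1 (\<lambda>s. 1))" by (rule Ev_Suc)
  also have "\<dots> = (\<Sum>S1\<in>Pow V. Kh S S1)"
  proof (intro sum.cong refl)
    fix S1 assume "S1 \<in> Pow V"
    thus "Kh S S1 * Ev T S1 (\<lambda>s. 1) = Kh S S1"
      using Suc.IH[of S1] by (cases "S1 = {}") (auto simp: Kh_to_empty)
  qed
  also have "\<dots> = 1" using Kh_total Suc.prems by simp
  finally show ?case .
qed

lemma Ev_const: "S \<subseteq> V \<Longrightarrow> S \<noteq> {} \<Longrightarrow> Ev T S (\<lambda>s. c) = c"
  using Ev_cmult[of T S c "\<lambda>_. 1"] Ev_one[of S T] by simp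

text \<open>After a Khat-step into S1, adding a constant commutes with the expectation (the
  case S1 = {} has weight 0).\<close>
lemma Kh_Ev_add_const:
  "S1 \<in> Pow V \<Longrightarrow> Kh S0 S1 * Ev T S1 (\<lambda>s. c + f s) = Kh S0 S1 * c + Kh S0 S1 * Ev T S1 f"
  by (cases "S1 = {}") (auto simp: Kh_to_empty Ev_add Ev_const distrib_left)


definition adapted :: "nat \<Rightarrow> 'a set \<Rightarrow> ((nat \<Rightarrow> 'a set) \<Rightarrow> nat \<Rightarrow> 'a set \<Rightarrow> real) \<Rightarrow> bool" where
  "adapted T S0 G \<longleftrightarrow>
     (\<forall>s\<in>paths V T S0. \<forall>s'\<in>paths V T S0. \<forall>j. (\<forall>i\<le>j. s i = s' i) \<longrightarrow> G s j = G s' j)"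

lemma stopping_time_shift:
  assumes st: "bounded_stopping_time V (Suc T) S0 \<tau>"
    and pos: "\<forall>c\<in>paths V (Suc T) S0. \<tau> c \<noteq> 0" and S1: "S1 \<in> Pow V"
  shows "bounded_stopping_time V T S1 (\<lambda>s. \<tau> (pcons S0 s) - 1)"
  unfolding bounded_stopping_time_def
proof (intro conjI ballI allI impI)
  fix s assume s: "s \<in> paths V T S1"
  show "\<tau> (pcons S0 s) - 1 \<le> T"
    using st pcons_in[OF S1 s] unfolding bounded_stopping_time_def by force
next
  fix s s' t assume s: "s \<in> paths V T S1" and s': "s' \<in> paths V T S1" and ag: "\<forall>i\<le>t. s i = s' i"
  have c: "pcons S0 s \<in> paths V (Suc T) S0" "pcons S0 s' \<in> paths V (Suc T) S0"
    using pcons_in[OF S1 s] pcons_in[OF S1 s'] by auto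
  have "\<tau> (pcons S0 s) = Suc t \<longleftrightarrow> \<tau> (pcons S0 s') = Suc t"
    using st c pcons_agree[OF ag] unfolding bounded_stopping_time_def by blast
  moreover have "\<tau> (pcons S0 s) \<noteq> 0" "\<tau> (pcons S0 s') \<noteq> 0" using pos c by auto
  ultimately show "\<tau> (pcons S0 s) - 1 = t \<longleftrightarrow> \<tau> (pcons S0 s') - 1 = t" by auto
qed

lemma adapted_shift:
  assumes ad: "adapted (Suc T) S0 G" and S1: "S1 \<in> Pow V"
  shows "adapted T S1 (\<lambda>s j. G (pcons S0 s) (Suc j))"
  unfolding adapted_def
proof (intro ballI allI impI)
  fix s s' j assume s: "s \<in> paths V T S1" and s': "s' \<in> paths V T S1" and ag: "\<forall>i\<le>j. s i = s' i"
  show "G (pcons S0 s) (Suc j) = G (pcons S0 s') (Suc j)"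
    using ad pcons_in[OF S1 s] pcons_in[OF S1 s'] pcons_agree[OF ag]
    unfolding adapted_def by blast
qed

lemma optional_stopping:
  assumes "S0 \<subseteq> V" "bounded_stopping_time V T S0 \<tau>" "adapted T S0 G"
  shows "Ev T S0 (\<lambda>s. \<Sum>j<\<tau> s. G s j (s (Suc j)))
       = Ev T S0 (\<lambda>s. \<Sum>j<\<tau> s. \<Sum>S'\<in>Pow V. Kh (s j) S' * G s j S')"
  using assms
proof (induction T arbitrary: S0 \<tau> G)
  case 0
  have "\<tau> s = 0" if "s \<in> paths V 0 S0" for s
    using 0(2) that unfolding bounded_stopping_time_def by auto
  thus ?case by (intro Ev_cong) simp
next
  case (Suc T)
  text \<open>Whether \<tau> = 0 is decided by s 0 = S0 alone, so \<tau> vanishes everywhere or nowhere.\<close>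
  show ?case
  proof (cases "\<exists>s\<in>paths V (Suc T) S0. \<tau> s = 0")
    case True
    then obtain s0 where s0: "s0 \<in> paths V (Suc T) S0" "\<tau> s0 = 0" by blast
    have "\<tau> s = 0" if s: "s \<in> paths V (Suc T) S0" for s
      using Suc.prems(2) s0 s paths_0[OF s0(1)] paths_0[OF s]
      unfolding bounded_stopping_time_def by (metis le_zero_eq)
    thus ?thesis by (intro Ev_cong) simp
  next
    case False
    hence pos: "\<forall>c\<in>paths V (Suc T) S0. \<tau> c \<noteq> 0" by auto
    obtain sp where sp: "sp \<in> paths V (Suc T) S0" using paths_ne by blast
    text \<open>The first increment is a fixed function g0 of the first step; the remaining
      ones form an adapted family for the shifted stopping time.\<close>
    define g0 where "g0 = G sp 0"
    define \<tau>' where "\<tau>' s = \<tau> (pcons S0 s) - 1" for s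
    define G' where "G' s j = G (pcons S0 s) (Suc j)" for s j
    have first: "\<tau> (pcons S0 s) = Suc (\<tau>' s)" "G (pcons S0 s) 0 = g0"
      if S1: "S1 \<in> Pow V" and s: "s \<in> paths V T S1" for S1 s
    proof -
      have c: "pcons S0 s \<in> paths V (Suc T) S0" by (rule pcons_in[OF S1 s])
      thus "\<tau> (pcons S0 s) = Suc (\<tau>' s)" using pos by (auto simp: \<tau>'_def)
      have "\<forall>i\<le>0. pcons S0 s i = sp i" using paths_0[OF sp] by simp
      thus "G (pcons S0 s) 0 = g0" using Suc.prems(3) c sp unfolding adapted_def g0_def by blast
    qed
    have IH: "Ev T S1 (\<lambda>s. \<Sum>j<\<tau>' s. G' s j (s (Suc j)))
            = Ev T S1 (\<lambda>s. \<Sum>j<\<tau>' s. \<Sum>S'\<in>Pow V. Kh (s j) S' * G' s j S')"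
      if S1: "S1 \<in> Pow V" for S1
      unfolding \<tau>'_def G'_def
      using S1 stopping_time_shift[OF Suc.prems(2) pos S1] adapted_shift[OF Suc.prems(3) S1]
      by (intro Suc.IH) auto
    have "Ev (Suc T) S0 (\<lambda>s. \<Sum>j<\<tau> s. G s j (s (Suc j)))
        = (\<Sum>S1\<in>Pow V. Kh S0 S1 * Ev T S1 (\<lambda>s. g0 S1 + (\<Sum>j<\<tau>' s. G' s j (s (Suc j)))))"
      unfolding Ev_Suc
    proof (intro sum.cong refl arg_cong2[where f="(*)"] Ev_cong)
      fix S1 s assume S1: "S1 \<in> Pow V" and s: "s \<in> paths V T S1"
      show "(\<Sum>j<\<tau> (pcons S0 s). G (pcons S0 s) j (pcons S0 s (Suc j)))
          = g0 S1 + (\<Sum>j<\<tau>' s. G' s j (s (Suc j)))"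
        unfolding first(1)[OF S1 s] sum.lessThan_Suc_shift
        using first(2)[OF S1 s] paths_0[OF s] by (simp add: G'_def)
    qed
    also have "\<dots> = (\<Sum>S1\<in>Pow V. Kh S0 S1 * g0 S1)
                  + (\<Sum>S1\<in>Pow V. Kh S0 S1 * Ev T S1 (\<lambda>s. \<Sum>j<\<tau>' s. \<Sum>S'\<in>Pow V. Kh (s j) S' * G' s j S'))"
      by (simp add: Kh_Ev_add_const IH sum.distrib)
    also have "\<dots> = (\<Sum>S1\<in>Pow V. Kh S0 S1 * Ev T S1 (\<lambda>s. (\<Sum>S'\<in>Pow V. Kh S0 S' * g0 S')
                  + (\<Sum>j<\<tau>' s. \<Sum>S'\<in>Pow V. Kh (s j) S' * G' s j S')))"
      using Kh_total[OF Suc.prems(1)]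
      by (cases "S0 = {}")
         (simp_all add: Kh_from_empty Kh_Ev_add_const sum.distrib sum_distrib_right[symmetric])
    also have "\<dots> = Ev (Suc T) S0 (\<lambda>s. \<Sum>j<\<tau> s. \<Sum>S'\<in>Pow V. Kh (s j) S' * G s j S')"
      unfolding Ev_Suc
    proof (intro sum.cong refl arg_cong2[where f="(*)"] Ev_cong)
      fix S1 s assume S1: "S1 \<in> Pow V" and s: "s \<in> paths V T S1"
      show "(\<Sum>S'\<in>Pow V. Kh S0 S' * g0 S') + (\<Sum>j<\<tau>' s. \<Sum>S'\<in>Pow V. Kh (s j) S' * G' s j S')
          = (\<Sum>j<\<tau> (pcons S0 s). \<Sum>S'\<in>Pow V. Kh (pcons S0 s j) S' * G (pcons S0 s) j S')"
        unfolding first(1)[OF S1 s] sum.lessThan_Suc_shift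
        using first(2)[OF S1 s] by (simp add: G'_def)
    qed
    finally show ?thesis .
  qed
qed


lemma cost_Suc:
  "cost V E s (Suc j) = cost V E s j + (vol V E (symdiff (s (Suc j)) (s j)) + bdry V E (s j))"
  unfolding cost_def by simp

lemma cost_nonneg: "cost V E s j \<ge> 0"
  unfolding cost_def by (intro add_nonneg_nonneg sum_nonneg vol_nonneg bdry_nonneg)

lemma cost_agree: "(\<forall>i\<le>j. s i = s' i) \<Longrightarrow> cost V E s j = cost V E s' j"
  unfolding cost_def by (intro arg_cong2[where f="(+)"] sum.cong) auto

text \<open>The increment of the cost ratio cost_j / vol S_j when S_{j+1} = S'.\<close>
definition cost_incr :: "(nat \<Rightarrow> 'a set) \<Rightarrow> nat \<Rightarrow> 'a set \<Rightarrow> real" where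
  "cost_incr s j S' = cost V E s j * (1 / vol V E S' - 1 / vol V E (s j))
     + (vol V E (symdiff S' (s j)) + bdry V E (s j)) / vol V E S'"

lemma cost_ratio_telescope:
  assumes "vol V E (s 0) \<noteq> 0"
  shows "cost V E s t / vol V E (s t) = 1 + (\<Sum>j<t. cost_incr s j (s (Suc j)))"
proof -
  define M where "M j = cost V E s j / vol V E (s j)" for j
  have "cost_incr s j (s (Suc j)) = M (Suc j) - M j" for j
    unfolding cost_incr_def M_def cost_Suc by (simp add: add_divide_distrib right_diff_distrib)
  hence "(\<Sum>j<t. cost_incr s j (s (Suc j))) = M t - M 0" by (simp add: sum_lessThan_telescope)
  moreover have "M 0 = 1" using assms by (simp add: M_def cost_def)
  ultimately show ?thesis by (simp add: M_def)
qed

context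
  fixes S0 :: "'a set" and T :: nat and \<tau> :: "(nat \<Rightarrow> 'a set) \<Rightarrow> nat"
  assumes S0: "S0 \<subseteq> V" "S0 \<noteq> {}" and st: "bounded_stopping_time V T S0 \<tau>"
begin

lemma tau_le: "s \<in> paths V T S0 \<Longrightarrow> \<tau> s \<le> T"
  using st unfolding bounded_stopping_time_def by auto

lemma stopped_sub: "s \<in> paths V T S0 \<Longrightarrow> j \<le> \<tau> s \<Longrightarrow> s j \<subseteq> V"
  using paths_sub[OF _ S0(1)] tau_le by (meson order_trans)

lemma expected_cost_ratio:
  "Ev T S0 (\<lambda>s. cost V E s (\<tau> s) / vol V E (s (\<tau> s))) \<le> 1 + 2 * Ev T S0 (\<lambda>s. \<Sum>j<\<tau> s. phi (s j))"
proof -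
  have ad: "adapted T S0 cost_incr"
    unfolding adapted_def by (auto simp: cost_incr_def fun_eq_iff dest: cost_agree)
  have "Ev T S0 (\<lambda>s. cost V E s (\<tau> s) / vol V E (s (\<tau> s)))
      = Ev T S0 (\<lambda>s. 1 + (\<Sum>j<\<tau> s. cost_incr s j (s (Suc j))))"
    using vol_ge1[OF S0] by (intro Ev_cong cost_ratio_telescope) (simp add: paths_0)
  also have "\<dots> = 1 + Ev T S0 (\<lambda>s. \<Sum>j<\<tau> s. \<Sum>S'\<in>Pow V. Kh (s j) S' * cost_incr s j S')"
    using Ev_add[of T S0 "\<lambda>_. 1"] Ev_const[OF S0] optional_stopping[OF S0(1) st ad] by simp
  also have "\<dots> \<le> 1 + Ev T S0 (\<lambda>s. 2 * (\<Sum>j<\<tau> s. phi (s j)))"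
    unfolding sum_distrib_left cost_incr_def
    by (intro add_left_mono Ev_mono sum_mono cost_ratio_drift cost_nonneg stopped_sub) auto
  finally show ?thesis by (simp add: Ev_cmult)
qed

text \<open>Stage (B): since ln vol S_t \<le> ln vol V and starts at ln vol S0 \<ge> 0, the expected
  accumulated squared conductance is at most 4 ln vol V.\<close>
lemma expected_sum_phi_sq:
  "Ev T S0 (\<lambda>s. \<Sum>j<\<tau> s. (phi (s j))\<^sup>2) \<le> 4 * ln (vol V E V)"
proof -
  define G where "G (s :: nat \<Rightarrow> 'a set) j S' = ln (vol V E S') - ln (vol V E (s j))" for s j S'
  have ad: "adapted T S0 G" unfolding adapted_def G_def by auto
  have lnS0: "0 \<le> ln (vol V E S0)" "ln (vol V E S0) \<le> ln (vol V E V)"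
    using vol_ge1[OF S0] vol_mono[OF S0(1)] by auto
  have final: "(\<Sum>j<\<tau> s. G s j (s (Suc j))) \<le> ln (vol V E V)" if s: "s \<in> paths V T S0" for s
  proof -
    have "(\<Sum>j<\<tau> s. G s j (s (Suc j))) = ln (vol V E (s (\<tau> s))) - ln (vol V E S0)"
      unfolding G_def using sum_lessThan_telescope[of "\<lambda>j. ln (vol V E (s j))" "\<tau> s"] paths_0[OF s]
      by simp
    also have "\<dots> \<le> ln (vol V E V)"
    proof (cases "s (\<tau> s) = {}")
      case True thus ?thesis using lnS0 by (simp add: vol_def)
    next
      case False
      have sub: "s (\<tau> s) \<subseteq> V" by (rule stopped_sub[OF s order_refl])
      have "ln (vol V E (s (\<tau> s))) \<le> ln (vol V E V)"
        using vol_ge1[OF sub False] vol_mono[OF sub subset_refl] by simp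
      thus ?thesis using lnS0 by linarith
    qed
    finally show ?thesis .
  qed
  have "Ev T S0 (\<lambda>s. \<Sum>j<\<tau> s. (phi (s j))\<^sup>2)
      \<le> Ev T S0 (\<lambda>s. 4 * (\<Sum>j<\<tau> s. \<Sum>S'\<in>Pow V. Kh (s j) S' * G s j S'))"
  proof (rule Ev_mono)
    fix s assume s: "s \<in> paths V T S0"
    have "(phi (s j))\<^sup>2 \<le> 4 * (\<Sum>S'\<in>Pow V. Kh (s j) S' * G s j S')" if "j < \<tau> s" for j
      using log_vol_drift[OF stopped_sub[OF s less_imp_le[OF that]]] unfolding G_def by linarith
    thus "(\<Sum>j<\<tau> s. (phi (s j))\<^sup>2) \<le> 4 * (\<Sum>j<\<tau> s. \<Sum>S'\<in>Pow V. Kh (s j) S' * G s j S')"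
      unfolding sum_distrib_left by (intro sum_mono) auto
  qed
  also have "\<dots> = 4 * Ev T S0 (\<lambda>s. \<Sum>j<\<tau> s. G s j (s (Suc j)))"
    by (simp add: Ev_cmult optional_stopping[OF S0(1) st ad])
  also have "\<dots> \<le> 4 * Ev T S0 (\<lambda>s. ln (vol V E V))"
    using final by (intro mult_left_mono Ev_mono) auto
  finally show ?thesis using Ev_const[OF S0] by simp
qed

text \<open>Stage (C): Cauchy-Schwarz over the at most T time steps and over the paths.\<close>
lemma expected_sum_phi:
  "Ev T S0 (\<lambda>s. \<Sum>j<\<tau> s. phi (s j)) \<le> sqrt (real T) * sqrt (Ev T S0 (\<lambda>s. \<Sum>j<\<tau> s. (phi (s j))\<^sup>2))"
proof -
  define Q where "Q s = (\<Sum>j<\<tau> s. (phi (s j))\<^sup>2)" for s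
  have Q: "Q s \<ge> 0" for s by (simp add: Q_def sum_nonneg)
  have "Ev T S0 (\<lambda>s. \<Sum>j<\<tau> s. phi (s j)) \<le> Ev T S0 (\<lambda>s. sqrt (real T) * sqrt (Q s))"
  proof (rule Ev_mono)
    fix s assume s: "s \<in> paths V T S0"
    have "(\<Sum>j<\<tau> s. phi (s j)) = (\<Sum>j<\<tau> s. 1 * sqrt ((phi (s j))\<^sup>2))" using phi_nonneg by simp
    also have "\<dots> \<le> sqrt (real (\<tau> s) * Q s)" using sum_sqrt_le[of "{..<\<tau> s}" "\<lambda>_. 1" "\<lambda>j. (phi (s j))\<^sup>2"] by (simp add: Q_def)
    also have "\<dots> \<le> sqrt (real T * Q s)"
      using tau_le[OF s] Q by (intro real_sqrt_le_mono mult_right_mono) auto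
    finally show "(\<Sum>j<\<tau> s. phi (s j)) \<le> sqrt (real T) * sqrt (Q s)" by (simp add: real_sqrt_mult)
  qed
  also have "Ev T S0 (\<lambda>s. sqrt (Q s)) \<le> sqrt (Ev T S0 Q)"
    using sum_sqrt_le[of "paths V T S0" "path_prob V E T" Q] Ev_one[OF S0]
    by (simp add: vb_expect_def path_prob_nonneg Q)
  hence "Ev T S0 (\<lambda>s. sqrt (real T) * sqrt (Q s)) \<le> sqrt (real T) * sqrt (Ev T S0 Q)"
    by (simp add: Ev_cmult mult_left_mono)
  finally show ?thesis unfolding Q_def[abs_def] .
qed

end

end

theorem theorem5:
  fixes V :: "'a set" and E :: "'a \<Rightarrow> 'a \<Rightarrow> bool" and S0 :: "'a set"
    and T :: nat and \<tau> :: "(nat \<Rightarrow> 'a set) \<Rightarrow> nat"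
  assumes "simple_graph V E"
    and "\<forall>x\<in>V. deg V E x > 0"
    and "S0 \<subseteq> V" and "S0 \<noteq> {}"
    and "bounded_stopping_time V T S0 \<tau>"
  shows "vb_expect V E T S0 (\<lambda>s. cost V E s (\<tau> s) / vol V E (s (\<tau> s)))
           \<le> 1 + 4 * sqrt (real T * ln (vol V E V))"
proof -
  interpret sgraph V E using assms(1,2) by unfold_locales
  define \<Phi> where "\<Phi> = Ev T S0 (\<lambda>s. \<Sum>j<\<tau> s. phi (s j))"
  define \<Phi>2 where "\<Phi>2 = Ev T S0 (\<lambda>s. \<Sum>j<\<tau> s. (phi (s j))\<^sup>2)"
  have "\<Phi> \<le> sqrt (real T) * sqrt \<Phi>2"
    unfolding \<Phi>_def \<Phi>2_def by (rule expected_sum_phi[OF assms(3-5)])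
  also have "\<dots> \<le> sqrt (real T) * sqrt (4 * ln (vol V E V))"
    unfolding \<Phi>2_def using expected_sum_phi_sq[OF assms(3-5)]
    by (intro mult_left_mono real_sqrt_le_mono) auto
  also have "\<dots> = 2 * sqrt (real T * ln (vol V E V))" by (simp add: real_sqrt_mult)
  finally have "\<Phi> \<le> 2 * sqrt (real T * ln (vol V E V))" .
  thus ?thesis using expected_cost_ratio[OF assms(3-5)] unfolding \<Phi>_def by linarith
qed

end
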